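(* In the setting below, if $\mu$ and $\nu$ are two $\sigma$-invariant Borel probability measures on $X$ with $p(\mu)=p(\nu)$, then $\mu(A)=\nu(A)$ for every $A\in\mathcal{P}_n$ and every $n\in\mathbb{N}$.
   Context: Setting: $G$ is a countable residually finite group, $r>1$; $(\Gamma_i)_{i\ge1}$ is a strictly decreasing sequence of finite index normal subgroups of $G$ with $\bigcap_i\Gamma_i=\{1_G\}$, $\Gamma_0=G$; $(D_i)_{i\ge0}$ are finite subsets with $D_0=\{1_G\}$, $D_i$ containing exactly one element of each coset of $\Gamma_i$, $1_G\in D_i\subseteq D_{i+1}$, $G=\bigcup_iD_i$, $D_j=\bigcup_{v\in D_j\cap\Gamma_i}vD_i$ for $j>i\ge1$, and $[G:\Gamma_i],[\Gamma_i:\Gamma_{i+1}]\ge3$. $\Sigma=\{1,\dots,r\}$, $\alpha_m\in\Sigma$ with $\alpha_m\equiv m\pmod r$. $J(0)=\{1_G\}$, $J(m)=D_m\setminus\bigcup_{i<m}J(i)\Gamma_{i+1}$; $\eta(hg)=\alpha_{m+1}$ for $h\in J(m)$, $g\in\Gamma_{m+1}$; $X=\overline{\{\sigma^g\eta\}}$ with $\sigma^gx(h)=x(g^{-1}h)$. $\mathrm{Per}(x,\Gamma,\alpha)=\{g:x(\gamma g)=\alpha\ \forall\gamma\in\Gamma\}$. For $n\ge1$: $C_n=\{x\in X:\mathrm{Per}(x,\Gamma_n,\alpha)=\mathrm{Per}(\eta,\Gamma_n,\alpha)\ \forall\alpha\in\Sigma\}$, $C_{n,i}=\{x\in C_n: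 x(g)=i\ \forall g\in J(n)\}$, and $\mathcal{P}_n=\{\sigma^{v^{-1}}C_{n,i}:1\le i\le r,\ v\in D_n\}$ (a clopen partition of $X$). $p(\mu)=(\mu(\{x\in X:x(1_G)=1\}),\dots,\mu(\{x\in X:x(1_G)=r\}))$. *)

theory Defs
  imports "HOL-Probability.Probability"
begin

text \<open>The group G is a type of class group_add (the group operation is written
  additively, it is NOT assumed commutative); 1_G is 0, g^{-1} is -g, gh is g + h.\<close>

definition subgroup_add :: "'g::group_add set \<Rightarrow> bool" where
  "subgroup_add H \<longleftrightarrow> 0 \<in> H \<and> (\<forall>a\<in>H. \<forall>b\<in>H. a + b \<in> H) \<and> (\<forall>a\<in>H. - a \<in> H)"

definition normal_subgroup_add :: "'g::group_add set \<Rightarrow> bool" where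
  "normal_subgroup_add H \<longleftrightarrow> subgroup_add H \<and> (\<forall>g. \<forall>h\<in>H. g + h + - g \<in> H)"

definition lcoset :: "'g::group_add \<Rightarrow> 'g set \<Rightarrow> 'g set" where
  "lcoset g H = (\<lambda>h. g + h) ` H"

text \<open>Index [K : H] (number of left cosets gH with g in K); 0 if infinite.\<close>
definition sub_index :: "'g::group_add set \<Rightarrow> 'g set \<Rightarrow> nat" where
  "sub_index K H = card {lcoset g H | g. g \<in> K}"

definition alpha :: "nat \<Rightarrow> nat \<Rightarrow> nat" where
  "alpha r m = (if m mod r = 0 then r else m mod r)"

fun J :: "(nat \<Rightarrow> 'g::group_add set) \<Rightarrow> (nat \<Rightarrow> 'g set) \<Rightarrow> nat \<Rightarrow> 'g set" where
  "J \<Gamma> D m = (if m = 0 then {0} else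
      D m - (\<Union>i\<in>{..<m}. \<Union>h\<in>J \<Gamma> D i. lcoset h (\<Gamma> (Suc i))))"

definition eta :: "nat \<Rightarrow> (nat \<Rightarrow> 'g::group_add set) \<Rightarrow> (nat \<Rightarrow> 'g set) \<Rightarrow> 'g \<Rightarrow> nat" where
  "eta r \<Gamma> D x = alpha r (Suc (LEAST m. \<exists>h\<in>J \<Gamma> D m. \<exists>g\<in>\<Gamma> (Suc m). x = h + g))"

definition shift :: "'g::group_add \<Rightarrow> ('g \<Rightarrow> 'a) \<Rightarrow> ('g \<Rightarrow> 'a)" where
  "shift g x = (\<lambda>h. x (- g + h))"

text \<open>X: orbit closure of eta in the product topology on G -> nat (nat discrete).\<close>
definition Xsp :: "nat \<Rightarrow> (nat \<Rightarrow> 'g::group_add set) \<Rightarrow> (nat \<Rightarrow> 'g set) \<Rightarrow> ('g \<Rightarrow> nat) set" where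
  "Xsp r \<Gamma> D = closure (range (\<lambda>g. shift g (eta r \<Gamma> D)))"

definition Per :: "('g::group_add \<Rightarrow> nat) \<Rightarrow> 'g set \<Rightarrow> nat \<Rightarrow> 'g set" where
  "Per x H a = {g. \<forall>\<gamma>\<in>H. x (\<gamma> + g) = a}"

definition Cn :: "nat \<Rightarrow> (nat \<Rightarrow> 'g::group_add set) \<Rightarrow> (nat \<Rightarrow> 'g set) \<Rightarrow> nat \<Rightarrow> ('g \<Rightarrow> nat) set" where
  "Cn r \<Gamma> D n = {x \<in> Xsp r \<Gamma> D. \<forall>a\<in>{1..r}. Per x (\<Gamma> n) a = Per (eta r \<Gamma> D) (\<Gamma> n) a}"

definition Cni :: "nat \<Rightarrow> (nat \<Rightarrow> 'g::group_add set) \<Rightarrow> (nat \<Rightarrow> 'g set) \<Rightarrow> nat \<Rightarrow> nat \<Rightarrow> ('g \<Rightarrow> nat) set" where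
  "Cni r \<Gamma> D n i = {x \<in> Cn r \<Gamma> D n. \<forall>g\<in>J \<Gamma> D n. x g = i}"

definition Pn :: "nat \<Rightarrow> (nat \<Rightarrow> 'g::group_add set) \<Rightarrow> (nat \<Rightarrow> 'g set) \<Rightarrow> nat \<Rightarrow> ('g \<Rightarrow> nat) set set" where
  "Pn r \<Gamma> D n = {shift (- v) ` Cni r \<Gamma> D n i | i v. i \<in> {1..r} \<and> v \<in> D n}"

end

theory Submission
  imports Defs
begin

text \<open>Every \<open>x \<in> X\<close> agrees on each finite window with a translate of \<open>\<eta>\<close>, and
  comparing the \<open>\<Gamma>\<^sub>n\<close>-periodic parts shows that exactly one translate \<open>\<sigma>\<^sup>v x\<close> with
  \<open>v \<in> D\<^sub>n\<close> lies in \<open>C\<^sub>n\<close>. Hence \<open>X\<close> is the disjoint union of the \<open>|D\<^sub>n|\<close> translates of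
  \<open>C\<^sub>n\<close>, and an invariant probability measure gives \<open>C\<^sub>n\<close> mass \<open>1/|D\<^sub>n|\<close>. A point of
  \<open>C\<^sub>n\<close> coincides with \<open>\<eta>\<close> on \<open>D\<^sub>n - J(n)\<close> and is constant on \<open>J(n)\<close>, so splitting
  \<open>{x. x(1\<^sub>G) = i}\<close> along the partition gives
  \<open>p\<^sub>i(\<mu>) = |J(n)| \<mu>(C\<^sub>n\<^sub>,\<^sub>i) + |{w \<in> D\<^sub>n - J(n). \<eta>(w) = i}| / |D\<^sub>n|\<close>.
  Thus \<open>p(\<mu>)\<close> determines \<open>\<mu>(C\<^sub>n\<^sub>,\<^sub>i)\<close>, and by invariance the measure of every atom of
  \<open>P\<^sub>n\<close>.\<close>

declare add_uminus_conv_diff [simp del]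

lemma shift_shift: "shift a (shift b z) = shift (a + b) z"
  unfolding shift_def by (simp add: minus_add add.assoc)

lemma shift_0 [simp]: "shift 0 z = z"
  unfolding shift_def by simp

lemma shift_minus_cancel [simp]: "shift (- g) (shift g z) = z" "shift g (shift (- g) z) = z"
  by (simp_all add: shift_shift)

lemma continuous_on_shift: "continuous_on S (shift g :: ('g::group_add \<Rightarrow> 'a::topological_space) \<Rightarrow> _)"
  unfolding shift_def
  by (intro continuous_on_coordinatewise_then_product
      continuous_on_subset[OF continuous_on_product_coordinates]) auto

lemma shift_orbit_closure:
  fixes z :: "'g::group_add \<Rightarrow> 'a::topological_space"
  assumes "y \<in> closure (range (\<lambda>g. shift g z))"
  shows "shift h y \<in> closure (range (\<lambda>g. shift g z))"
proof -
  have "shift h ` range (\<lambda>g. shift g z) \<subseteq> range (\<lambda>g. shift g z)"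
    by (auto simp: shift_shift)
  then have "shift h ` closure (range (\<lambda>g. shift g z)) \<subseteq> closure (range (\<lambda>g. shift g z))"
    by (intro image_closure_subset continuous_on_shift closed_closure order.trans[OF _ closure_subset])
  then show ?thesis using assms by blast
qed

lemma orbit_closure_locally_shift:
  fixes z :: "'g::group_add \<Rightarrow> nat"
  assumes y: "y \<in> closure (range (\<lambda>g. shift g z))" and F: "finite F"
  shows "\<exists>t. \<forall>f\<in>F. y f = z (- t + f)"
proof -
  define W where "W = Pi\<^sub>E UNIV (\<lambda>i. if i \<in> F then {y i} else UNIV)"
  have "open W" unfolding W_def
  proof (rule open_PiE)
    show "finite {i. (if i \<in> F then {y i} else UNIV) \<noteq> UNIV}"
      by (rule finite_subset[OF _ F]) auto
  qed (auto intro: discrete_topology_class.open_discrete)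
  moreover have "y \<in> W" unfolding W_def by auto
  ultimately have "W \<inter> range (\<lambda>g. shift g z) \<noteq> {}"
    using y open_Int_closure_eq_empty[of W "range (\<lambda>g. shift g z)"] by auto
  then obtain t where "shift t z \<in> W" by auto
  then have "\<forall>f\<in>F. y f = z (- t + f)" unfolding W_def shift_def by (auto simp: PiE_iff split: if_splits)
  then show ?thesis by blast
qed

lemma Per_shift:
  assumes "normal_subgroup_add H"
  shows "x \<in> Per (shift g z) H a \<longleftrightarrow> - g + x \<in> Per z H a"
proof -
  have conj: "c + \<gamma> + - c \<in> H" if "\<gamma> \<in> H" for c \<gamma>
    using assms that unfolding normal_subgroup_add_def by blast
  show ?thesis
  proof
    assume x: "x \<in> Per (shift g z) H a"
    show "- g + x \<in> Per z H a" unfolding Per_def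
    proof (intro CollectI ballI)
      fix \<gamma> assume "\<gamma> \<in> H"
      then have "shift g z (g + \<gamma> + - g + x) = a" using x conj unfolding Per_def by blast
      then show "z (\<gamma> + (- g + x)) = a" unfolding shift_def by (simp add: add.assoc)
    qed
  next
    assume x: "- g + x \<in> Per z H a"
    show "x \<in> Per (shift g z) H a" unfolding Per_def
    proof (intro CollectI ballI)
      fix \<gamma> assume "\<gamma> \<in> H"
      then have "z (- g + \<gamma> + - (- g) + (- g + x)) = a" using x conj unfolding Per_def by blast
      then show "shift g z (\<gamma> + x) = a" unfolding shift_def by (simp add: add.assoc)
    qed
  qed
qed

lemma alpha_in_range: "r > 0 \<Longrightarrow> alpha r m \<in> {1..r}"
  unfolding alpha_def by auto

lemma alpha_Suc_neq: "r > 1 \<Longrightarrow> alpha r (Suc m) \<noteq> alpha r m"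
  unfolding alpha_def by (auto simp: mod_Suc split: if_splits)

lemma sub_index_UNIV_UNIV: "sub_index UNIV (UNIV :: 'g::group_add set) = 1"
proof -
  have "lcoset g UNIV = (UNIV :: 'g set)" for g :: 'g
    unfolding lcoset_def by (metis UNIV_eq_I add_minus_cancel rangeI)
  then have "{lcoset g (UNIV :: 'g set) | g. g \<in> UNIV} = {UNIV}" by auto
  then show ?thesis unfolding sub_index_def by simp
qed

locale normal_filtration =
  fixes \<Gamma> D :: "nat \<Rightarrow> 'g::group_add set"
  assumes Gamma_0: "\<Gamma> 0 = UNIV"
    and Gamma_normal: "\<And>i. i \<ge> 1 \<Longrightarrow> normal_subgroup_add (\<Gamma> i)"
    and Gamma_strict: "\<And>i. i \<ge> 1 \<Longrightarrow> \<Gamma> (Suc i) \<subset> \<Gamma> i"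
    and Gamma_1: "\<Gamma> 1 \<noteq> UNIV"
    and D_finite: "\<And>i. finite (D i)"
    and D_transversal: "\<And>i g. \<exists>!d. d \<in> D i \<and> d \<in> lcoset g (\<Gamma> i)"
    and D_zero: "\<And>i. 0 \<in> D i"
    and D_nested: "\<And>i j. 1 \<le> i \<Longrightarrow> i < j \<Longrightarrow> D j = (\<Union>v\<in>D j \<inter> \<Gamma> i. (\<lambda>d. v + d) ` D i)"
begin

lemma normal_Gamma: "normal_subgroup_add (\<Gamma> i)"
  using Gamma_normal[of i] Gamma_0
  by (cases "i = 0") (auto simp: normal_subgroup_add_def subgroup_add_def)

lemma Gamma_zero [simp]: "0 \<in> \<Gamma> i"
  using normal_Gamma[of i] by (simp add: normal_subgroup_add_def subgroup_add_def)

lemma Gamma_add [intro]: "a \<in> \<Gamma> i \<Longrightarrow> b \<in> \<Gamma> i \<Longrightarrow> a + b \<in> \<Gamma> i"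
  using normal_Gamma[of i] by (simp add: normal_subgroup_add_def subgroup_add_def)

lemma Gamma_minus_iff [simp]: "- a \<in> \<Gamma> i \<longleftrightarrow> a \<in> \<Gamma> i"
  using normal_Gamma[of i] unfolding normal_subgroup_add_def subgroup_add_def by (metis minus_minus)

lemma Gamma_conj_iff [simp]: "g + h + - g \<in> \<Gamma> i \<longleftrightarrow> h \<in> \<Gamma> i"
proof
  have conj: "c + k + - c \<in> \<Gamma> i" if "k \<in> \<Gamma> i" for c k
    using normal_Gamma[of i] that unfolding normal_subgroup_add_def by blast
  show "h \<in> \<Gamma> i \<Longrightarrow> g + h + - g \<in> \<Gamma> i" by (rule conj)
  assume "g + h + - g \<in> \<Gamma> i"
  then have "- g + (g + h + - g) + - (- g) \<in> \<Gamma> i" by (rule conj)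
  then show "h \<in> \<Gamma> i" by (simp add: add.assoc)
qed

lemma Gamma_conj_iff' [simp]: "- g + h + g \<in> \<Gamma> i \<longleftrightarrow> h \<in> \<Gamma> i"
  using Gamma_conj_iff[of "- g" h i] by simp

lemma Gamma_Suc_subset: "\<Gamma> (Suc i) \<subseteq> \<Gamma> i"
  using Gamma_strict[of i] Gamma_0 by (cases "i = 0") auto

lemma Gamma_antimono: "i \<le> j \<Longrightarrow> x \<in> \<Gamma> j \<Longrightarrow> x \<in> \<Gamma> i"
  by (induction j rule: dec_induct) (use Gamma_Suc_subset in auto)

lemma Gamma_step_nonempty: "\<exists>\<gamma>\<in>\<Gamma> i. \<gamma> \<notin> \<Gamma> (Suc i)"
  using Gamma_strict[of i] Gamma_1 Gamma_0 by (cases "i = 0") auto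

lemma transversal_rep: "\<exists>d\<in>D i. \<exists>\<gamma>\<in>\<Gamma> i. d = x + \<gamma>"
  using D_transversal[of i x] unfolding lcoset_def by blast

lemma transversal_unique: "d \<in> D i \<Longrightarrow> d' \<in> D i \<Longrightarrow> - d + d' \<in> \<Gamma> i \<Longrightarrow> d = d'"
proof -
  assume d: "d \<in> D i" "d' \<in> D i" "- d + d' \<in> \<Gamma> i"
  have "d \<in> lcoset d (\<Gamma> i)" unfolding lcoset_def by (auto intro: image_eqI[of _ _ 0])
  moreover have "d' \<in> lcoset d (\<Gamma> i)" unfolding lcoset_def
    using d by (auto intro: image_eqI[of _ _ "- d + d'"])
  ultimately show ?thesis using D_transversal[of i d] d by blast
qed

lemma D_0: "D 0 = {0}"
  using transversal_unique[of 0 0] D_zero Gamma_0 by blast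

text \<open>The Toeplitz array takes the value \<open>\<alpha>\<^sub>m\<^sub>+\<^sub>1\<close> exactly on \<open>level m = J(m)\<Gamma>\<^sub>m\<^sub>+\<^sub>1\<close>; at stage
  \<open>m\<close> the \<open>\<Gamma>\<^sub>m\<close>-cosets are partitioned into the \<open>filled\<close> ones, on which the array is
  \<open>\<Gamma>\<^sub>m\<close>-periodic, and the \<open>holes J(m)\<Gamma>\<^sub>m\<close>.\<close>

definition level :: "nat \<Rightarrow> 'g set" where
  "level m = {x. \<exists>h\<in>J \<Gamma> D m. \<exists>g\<in>\<Gamma> (Suc m). x = h + g}"

definition filled :: "nat \<Rightarrow> 'g set" where
  "filled m = (\<Union>j<m. level j)"

definition holes :: "nat \<Rightarrow> 'g set" where
  "holes m = {x. \<exists>h\<in>J \<Gamma> D m. \<exists>g\<in>\<Gamma> m. x = h + g}"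

lemma J_eq_D_diff_filled: "J \<Gamma> D m = D m - filled m"
proof (cases "m = 0")
  case True
  then show ?thesis by (simp add: D_0 filled_def)
next
  case False
  have "(\<Union>i\<in>{..<m}. \<Union>h\<in>J \<Gamma> D i. lcoset h (\<Gamma> (Suc i))) = filled m"
    unfolding filled_def level_def lcoset_def by auto
  then show ?thesis using False by simp
qed

declare J.simps [simp del]

lemma J_subset_D: "h \<in> J \<Gamma> D m \<Longrightarrow> h \<in> D m"
  using J_eq_D_diff_filled by auto

lemma J_not_filled: "h \<in> J \<Gamma> D m \<Longrightarrow> h \<notin> filled m"
  using J_eq_D_diff_filled by auto

lemma finite_J: "finite (J \<Gamma> D n)"
  using J_eq_D_diff_filled D_finite by auto

lemma J_subset_level: "h \<in> J \<Gamma> D m \<Longrightarrow> h \<in> level m"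
  unfolding level_def by (intro CollectI bexI[of _ h] bexI[of _ 0]) auto

lemma J_subset_holes: "h \<in> J \<Gamma> D m \<Longrightarrow> h \<in> holes m"
  unfolding holes_def by (intro CollectI bexI[of _ h] bexI[of _ 0]) auto

lemma level_subset_filled: "j < m \<Longrightarrow> level j \<subseteq> filled m"
  unfolding filled_def by auto

lemma level_add_right: "x \<in> level j \<Longrightarrow> \<gamma> \<in> \<Gamma> (Suc j) \<Longrightarrow> x + \<gamma> \<in> level j"
  unfolding level_def by (auto simp: add.assoc) (metis Gamma_add add.assoc)

lemma level_add_left: "x \<in> level j \<Longrightarrow> \<gamma> \<in> \<Gamma> (Suc j) \<Longrightarrow> \<gamma> + x \<in> level j"
proof -
  assume "x \<in> level j" "\<gamma> \<in> \<Gamma> (Suc j)"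
  then obtain h g where hg: "h \<in> J \<Gamma> D j" "g \<in> \<Gamma> (Suc j)" "x = h + g"
    unfolding level_def by auto
  have "\<gamma> + x = h + ((- h + \<gamma> + h) + g)" using hg by (simp add: add.assoc)
  moreover have "(- h + \<gamma> + h) + g \<in> \<Gamma> (Suc j)" using hg \<open>\<gamma> \<in> _\<close> by auto
  ultimately show ?thesis using hg unfolding level_def by blast
qed

lemma filled_add_right:
  assumes "x \<in> filled m" "\<gamma> \<in> \<Gamma> m"
  shows "x + \<gamma> \<in> filled m"
proof -
  obtain j where j: "j < m" "x \<in> level j" using assms(1) unfolding filled_def by auto
  then have "\<gamma> \<in> \<Gamma> (Suc j)" using Gamma_antimono[of "Suc j" m] assms(2) by simp
  then show ?thesis using j level_add_right unfolding filled_def by auto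
qed

lemma filled_add_left:
  assumes "x \<in> filled m" "\<gamma> \<in> \<Gamma> m"
  shows "\<gamma> + x \<in> filled m"
proof -
  obtain j where j: "j < m" "x \<in> level j" using assms(1) unfolding filled_def by auto
  then have "\<gamma> \<in> \<Gamma> (Suc j)" using Gamma_antimono[of "Suc j" m] assms(2) by simp
  then show ?thesis using j level_add_left unfolding filled_def by auto
qed

lemma level_disjoint: "x \<in> level m \<Longrightarrow> x \<in> level j \<Longrightarrow> j < m \<Longrightarrow> False"
proof -
  assume x: "x \<in> level m" "x \<in> level j" "j < m"
  then obtain h g where hg: "h \<in> J \<Gamma> D m" "g \<in> \<Gamma> (Suc m)" "x = h + g"
    unfolding level_def by auto
  have "x \<in> filled m" using x level_subset_filled by auto
  then have "x + - g \<in> filled m" using hg Gamma_Suc_subset by (intro filled_add_right) auto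
  then show False using hg J_not_filled by (simp add: add.assoc)
qed

lemma holes_filled_disjoint: "x \<in> holes m \<Longrightarrow> x \<notin> filled m"
proof
  assume x: "x \<in> holes m" "x \<in> filled m"
  then obtain h g where hg: "h \<in> J \<Gamma> D m" "g \<in> \<Gamma> m" "x = h + g"
    unfolding holes_def by auto
  have "x + - g \<in> filled m" using x hg by (intro filled_add_right) auto
  then show False using hg J_not_filled by (simp add: add.assoc)
qed

lemma filled_or_holes: "x \<in> filled m \<or> x \<in> holes m"
proof -
  obtain d \<gamma> where d: "d \<in> D m" "\<gamma> \<in> \<Gamma> m" "d = x + \<gamma>"
    using transversal_rep by blast
  show ?thesis
  proof (cases "d \<in> filled m")
    case True
    then have "d + - \<gamma> \<in> filled m" using d by (intro filled_add_right) auto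
    then show ?thesis using d by (simp add: add.assoc)
  next
    case False
    then have "d \<in> J \<Gamma> D m" using d J_eq_D_diff_filled by auto
    then have "d + - \<gamma> \<in> holes m" using d unfolding holes_def
      by (intro CollectI bexI[of _ d] bexI[of _ "- \<gamma>"]) auto
    then show ?thesis using d by (simp add: add.assoc)
  qed
qed

lemma not_filled_iff_holes: "x \<notin> filled m \<longleftrightarrow> x \<in> holes m"
  using filled_or_holes holes_filled_disjoint by blast

lemma D_holes_iff_J: "x \<in> D m \<Longrightarrow> x \<in> holes m \<longleftrightarrow> x \<in> J \<Gamma> D m"
  using J_eq_D_diff_filled not_filled_iff_holes by auto

lemma holes_add_right: "x \<in> holes m \<Longrightarrow> \<gamma> \<in> \<Gamma> m \<Longrightarrow> x + \<gamma> \<in> holes m"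
  using filled_add_right[of "x + \<gamma>" m "- \<gamma>"] by (auto simp: add.assoc simp flip: not_filled_iff_holes)

lemma holes_add_left: "x \<in> holes m \<Longrightarrow> \<gamma> \<in> \<Gamma> m \<Longrightarrow> \<gamma> + x \<in> holes m"
  using filled_add_left[of "\<gamma> + x" m "- \<gamma>"] by (auto simp: add.assoc[symmetric] simp flip: not_filled_iff_holes)

lemma J_Suc_if_J:
  assumes h: "h \<in> J \<Gamma> D i" and \<gamma>: "\<gamma> \<in> \<Gamma> i" "\<gamma> \<notin> \<Gamma> (Suc i)"
    and d: "d \<in> D (Suc i)" "\<gamma>' \<in> \<Gamma> (Suc i)" "d = h + \<gamma> + \<gamma>'"
  shows "d \<in> J \<Gamma> D (Suc i)"
proof -
  have \<gamma>': "\<gamma>' \<in> \<Gamma> i" using d Gamma_Suc_subset by auto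
  have "d \<notin> filled (Suc i)"
  proof
    assume "d \<in> filled (Suc i)"
    then obtain j where j: "j < Suc i" "d \<in> level j" unfolding filled_def by auto
    show False
    proof (cases "j < i")
      case True
      then have "d \<in> filled i" using j level_subset_filled by auto
      then have "d + - (\<gamma> + \<gamma>') \<in> filled i" using \<gamma> \<gamma>' by (intro filled_add_right) auto
      moreover have "d + - (\<gamma> + \<gamma>') = h" using d by (simp add: add.assoc minus_add)
      ultimately show False using h J_not_filled by auto
    next
      case False
      then obtain h' g where hg: "h' \<in> J \<Gamma> D i" "g \<in> \<Gamma> (Suc i)" "d = h' + g"
        using j unfolding level_def by (auto simp: less_Suc_eq)
      have g: "g \<in> \<Gamma> i" using hg Gamma_Suc_subset by auto
      have "h' = (h' + g) + - g" by (simp add: add.assoc)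
      also have "h' + g = h + \<gamma> + \<gamma>'" using d hg by simp
      finally have "- h + h' = \<gamma> + \<gamma>' + - g" by (simp add: add.assoc)
      then have "- h + h' \<in> \<Gamma> i" using \<gamma> \<gamma>' g by auto
      then have "h' = h" using transversal_unique[OF J_subset_D[OF h] J_subset_D[OF hg(1)]] by simp
      then have "h + g = h + (\<gamma> + \<gamma>')" using d hg by (simp add: add.assoc)
      then have "\<gamma> = g + - \<gamma>'" by (simp add: add.assoc)
      then show False using hg d \<gamma> by auto
    qed
  qed
  then show ?thesis using d J_eq_D_diff_filled by auto
qed

lemma J_Suc_near_J:
  assumes h: "h \<in> J \<Gamma> D n"
  shows "\<exists>e\<in>J \<Gamma> D (Suc n). - h + e \<in> \<Gamma> n"
proof -
  obtain \<gamma> where \<gamma>: "\<gamma> \<in> \<Gamma> n" "\<gamma> \<notin> \<Gamma> (Suc n)" using Gamma_step_nonempty by auto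
  obtain d \<gamma>' where d: "d \<in> D (Suc n)" "\<gamma>' \<in> \<Gamma> (Suc n)" "d = h + \<gamma> + \<gamma>'"
    using transversal_rep[of "Suc n" "h + \<gamma>"] by auto
  have "- h + d = \<gamma> + \<gamma>'" using d by (simp add: add.assoc)
  moreover have "\<gamma>' \<in> \<Gamma> n" using d Gamma_Suc_subset by auto
  ultimately show ?thesis using J_Suc_if_J[OF h \<gamma> d] \<gamma> by (intro bexI[of _ d]) auto
qed

lemma J_nonempty: "\<exists>h. h \<in> J \<Gamma> D i"
proof (induction i)
  case 0
  then show ?case using J_eq_D_diff_filled D_0 by (auto simp: filled_def)
next
  case (Suc i)
  then show ?case using J_Suc_near_J by blast
qed

lemma card_J_pos: "card (J \<Gamma> D n) > 0"
  using J_nonempty finite_J card_gt_0_iff by blast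

lemma filled_add_left_iff: "\<gamma> \<in> \<Gamma> m \<Longrightarrow> \<gamma> + x \<in> filled m \<longleftrightarrow> x \<in> filled m"
  using filled_add_left[of "\<gamma> + x" m "- \<gamma>"] filled_add_left[of x m \<gamma>] by (auto simp: add.assoc[symmetric])

lemma add_mem_D_iff:
  assumes n: "1 \<le> n" "n \<le> m" and k: "k \<in> \<Gamma> n" and h: "h \<in> D n"
  shows "k + h \<in> D m \<longleftrightarrow> k \<in> D m"
proof (cases "m = n")
  case True
  show ?thesis
  proof
    assume "k + h \<in> D m"
    moreover have "- h + (k + h) \<in> \<Gamma> n" using k by (simp add: add.assoc[symmetric])
    ultimately have "h = k + h" using transversal_unique[of h n "k + h"] h True by auto
    then have "k = 0" by (metis add_0 add_right_cancel)
    then show "k \<in> D m" using D_zero by simp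
  next
    assume "k \<in> D m"
    then have "0 = k" using transversal_unique[of 0 n k] k True D_zero by auto
    then show "k + h \<in> D m" using h True by simp
  qed
next
  case False
  then have D_m: "D m = (\<Union>v\<in>D m \<inter> \<Gamma> n. (\<lambda>d. v + d) ` D n)"
    using n D_nested by simp
  show ?thesis
  proof
    assume "k + h \<in> D m"
    then obtain v d where vd: "v \<in> D m" "v \<in> \<Gamma> n" "d \<in> D n" "k + h = v + d"
      using D_m by blast
    have "d = - v + (k + h)" using vd by (simp add: add.assoc[symmetric])
    then have "- h + d = - h + (- v + k) + h" by (simp add: add.assoc)
    moreover have "- v + k \<in> \<Gamma> n" using vd k by auto
    ultimately have "h = d" using transversal_unique h vd by auto
    then show "k \<in> D m" using vd by simp
  next
    assume "k \<in> D m"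
    then show "k + h \<in> D m" using D_m k h by blast
  qed
qed

lemma add_mem_level_iff:
  assumes "n \<le> m" and k: "k \<in> \<Gamma> n"
  shows "k + h \<in> level m \<longleftrightarrow> (\<exists>k'\<in>\<Gamma> n. k' + h \<in> J \<Gamma> D m \<and> - k' + k \<in> \<Gamma> (Suc m))"
proof
  assume "k + h \<in> level m"
  then obtain x \<gamma> where x: "x \<in> J \<Gamma> D m" "\<gamma> \<in> \<Gamma> (Suc m)" "k + h = x + \<gamma>"
    unfolding level_def by auto
  have "\<gamma> \<in> \<Gamma> n" using x assms Gamma_antimono[of n "Suc m"] by simp
  have x_eq: "x = k + h + - \<gamma>" using x by (simp add: add.assoc)
  have "x + - h = k + (h + - \<gamma> + - h)" unfolding x_eq by (simp add: add.assoc)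
  then have "x + - h \<in> \<Gamma> n" using k \<open>\<gamma> \<in> \<Gamma> n\<close> by (simp add: Gamma_add)
  moreover have "- (x + - h) + k = h + \<gamma> + - h" unfolding x_eq by (simp add: add.assoc minus_add)
  then have "- (x + - h) + k \<in> \<Gamma> (Suc m)" using x by simp
  moreover have "x + - h + h \<in> J \<Gamma> D m" using x by (simp add: add.assoc)
  ultimately show "\<exists>k'\<in>\<Gamma> n. k' + h \<in> J \<Gamma> D m \<and> - k' + k \<in> \<Gamma> (Suc m)" by blast
next
  assume "\<exists>k'\<in>\<Gamma> n. k' + h \<in> J \<Gamma> D m \<and> - k' + k \<in> \<Gamma> (Suc m)"
  then obtain k' where k': "k' + h \<in> J \<Gamma> D m" "- k' + k \<in> \<Gamma> (Suc m)" by auto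
  have "k + h = (k' + h) + (- h + (- k' + k) + h)" by (simp add: add.assoc)
  moreover have "- h + (- k' + k) + h \<in> \<Gamma> (Suc m)" using k' by simp
  ultimately show "k + h \<in> level m" unfolding level_def using k' by blast
qed

text \<open>Since each \<open>D\<^sub>m\<close>, \<open>m \<ge> n\<close>, is a union of \<open>\<Gamma>\<^sub>n\<close>-translates of \<open>D\<^sub>n\<close>, the construction
  of all later levels treats \<open>k + h\<close> and \<open>k + h'\<close> alike.\<close>

lemma add_J_level_iff:
  assumes n: "1 \<le> n" and h: "h \<in> J \<Gamma> D n" and h': "h' \<in> J \<Gamma> D n" and k: "k \<in> \<Gamma> n"
  shows "k + h \<in> level m \<longleftrightarrow> k + h' \<in> level m"
  using k
proof (induction m arbitrary: k rule: less_induct)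
  case (less m)
  show ?case
  proof (cases "m < n")
    case True
    have "k + x \<notin> level m" if "x \<in> J \<Gamma> D n" for x
      using holes_add_left[OF J_subset_holes[OF that] less.prems] True
        level_subset_filled holes_filled_disjoint by blast
    then show ?thesis using h h' by auto
  next
    case False
    then have nm: "n \<le> m" by simp
    have "k' + h \<in> J \<Gamma> D m \<longleftrightarrow> k' + h' \<in> J \<Gamma> D m" if k': "k' \<in> \<Gamma> n" for k'
    proof -
      have "k' + h \<in> D m \<longleftrightarrow> k' + h' \<in> D m"
        using add_mem_D_iff[OF n nm k'] J_subset_D h h' by simp
      moreover have "k' + h \<in> filled m \<longleftrightarrow> k' + h' \<in> filled m"
        unfolding filled_def using less.IH k' by auto
      ultimately show ?thesis using J_eq_D_diff_filled by auto
    qed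
    then show ?thesis
      unfolding add_mem_level_iff[OF nm less.prems] by blast
  qed
qed

end

locale toeplitz = normal_filtration \<Gamma> D for \<Gamma> D :: "nat \<Rightarrow> 'g::group_add set" +
  fixes r :: nat
  assumes r_gt_1: "r > 1"
begin

abbreviation \<eta> :: "'g \<Rightarrow> nat" where "\<eta> \<equiv> eta r \<Gamma> D"

lemma eta_eq_Least_level: "\<eta> x = alpha r (Suc (LEAST m. x \<in> level m))"
  unfolding eta_def level_def by simp

lemma eta_level:
  assumes "x \<in> level m"
  shows "\<eta> x = alpha r (Suc m)"
proof -
  have "(LEAST m. x \<in> level m) = m"
    using assms level_disjoint by (intro Least_equality) (auto simp: not_le[symmetric])
  then show ?thesis by (simp add: eta_eq_Least_level)
qed

lemma eta_in_range: "\<eta> x \<in> {1..r}"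
  unfolding eta_def using r_gt_1 by (intro alpha_in_range) simp

lemma eta_filled_add_left: "x \<in> filled n \<Longrightarrow> \<gamma> \<in> \<Gamma> n \<Longrightarrow> \<eta> (\<gamma> + x) = \<eta> x"
proof -
  assume x: "x \<in> filled n" and \<gamma>: "\<gamma> \<in> \<Gamma> n"
  then obtain j where j: "j < n" "x \<in> level j" unfolding filled_def by auto
  then have "\<gamma> \<in> \<Gamma> (Suc j)" using Gamma_antimono[of "Suc j" n] \<gamma> by simp
  then show ?thesis using eta_level level_add_left j by simp
qed

lemma eta_filled_add_right: "x \<in> filled n \<Longrightarrow> \<gamma> \<in> \<Gamma> n \<Longrightarrow> \<eta> (x + \<gamma>) = \<eta> x"
proof -
  assume x: "x \<in> filled n" and \<gamma>: "\<gamma> \<in> \<Gamma> n"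
  then obtain j where j: "j < n" "x \<in> level j" unfolding filled_def by auto
  then have "\<gamma> \<in> \<Gamma> (Suc j)" using Gamma_antimono[of "Suc j" n] \<gamma> by simp
  then show ?thesis using eta_level level_add_right j by simp
qed

lemma eta_add_J_eq:
  assumes "1 \<le> n" "h \<in> J \<Gamma> D n" "h' \<in> J \<Gamma> D n" "k \<in> \<Gamma> n"
  shows "\<eta> (k + h) = \<eta> (k + h')"
  using add_J_level_iff[OF assms] by (simp add: eta_eq_Least_level)

lemma eta_nonconst_on_holes:
  assumes "x \<in> holes n"
  shows "\<exists>\<gamma>\<in>\<Gamma> n. \<exists>\<gamma>'\<in>\<Gamma> n. \<eta> (\<gamma> + x) \<noteq> \<eta> (\<gamma>' + x)"
proof -
  obtain h g where hg: "h \<in> J \<Gamma> D n" "g \<in> \<Gamma> n" "x = h + g"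
    using assms unfolding holes_def by auto
  obtain e where e: "e \<in> J \<Gamma> D (Suc n)" "- h + e \<in> \<Gamma> n"
    using J_Suc_near_J hg by auto
  have "h + - x = h + - g + - h" using hg by (simp add: minus_add add.assoc)
  then have h_x: "h + - x \<in> \<Gamma> n" using hg by simp
  have "e + - x = h + ((- h + e) + - g) + - h" using hg by (simp add: minus_add add.assoc)
  then have e_x: "e + - x \<in> \<Gamma> n" using hg e by auto
  have "\<eta> (h + - x + x) = alpha r (Suc n)"
    using J_subset_level hg eta_level by (simp add: add.assoc)
  moreover have "\<eta> (e + - x + x) = alpha r (Suc (Suc n))"
    using J_subset_level e eta_level by (simp add: add.assoc)
  ultimately have "\<eta> (h + - x + x) \<noteq> \<eta> (e + - x + x)"
    using alpha_Suc_neq[OF r_gt_1, of "Suc n"] by simp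
  then show ?thesis using h_x e_x by blast
qed

lemma Per_eta: "x \<in> Per \<eta> (\<Gamma> n) a \<longleftrightarrow> x \<in> filled n \<and> \<eta> x = a"
proof
  assume x: "x \<in> Per \<eta> (\<Gamma> n) a"
  then have "\<eta> (0 + x) = a" using Gamma_zero[of n] unfolding Per_def by blast
  moreover have "x \<in> filled n"
  proof (rule ccontr)
    assume "x \<notin> filled n"
    then obtain \<gamma> \<gamma>' where "\<gamma> \<in> \<Gamma> n" "\<gamma>' \<in> \<Gamma> n" "\<eta> (\<gamma> + x) \<noteq> \<eta> (\<gamma>' + x)"
      using eta_nonconst_on_holes not_filled_iff_holes by blast
    then show False using x unfolding Per_def by auto
  qed
  ultimately show "x \<in> filled n \<and> \<eta> x = a" by simp
next
  assume "x \<in> filled n \<and> \<eta> x = a"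
  then show "x \<in> Per \<eta> (\<Gamma> n) a" unfolding Per_def using eta_filled_add_left by auto
qed

lemma mem_Gamma_if_preserves_eta:
  assumes k: "\<forall>x\<in>filled n. k + x \<in> filled n \<and> \<eta> (k + x) = \<eta> x"
  shows "k \<in> \<Gamma> n"
proof -
  have "k \<in> \<Gamma> i" if "i \<le> n" for i
    using that
  proof (induction i)
    case 0
    then show ?case using Gamma_0 by simp
  next
    case (Suc i)
    then have k_i: "k \<in> \<Gamma> i" and "i < n" by auto
    obtain h where h: "h \<in> J \<Gamma> D i" using J_nonempty by auto
    define \<gamma> where "\<gamma> = - h + k + h"
    have \<gamma>_i: "\<gamma> \<in> \<Gamma> i" using k_i unfolding \<gamma>_def by simp
    have "\<gamma> \<in> \<Gamma> (Suc i)"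
    proof (rule ccontr)
      assume \<gamma>_Suc: "\<gamma> \<notin> \<Gamma> (Suc i)"
      obtain d \<gamma>' where d: "d \<in> D (Suc i)" "\<gamma>' \<in> \<Gamma> (Suc i)" "d = h + \<gamma> + \<gamma>'"
        using transversal_rep[of "Suc i" "h + \<gamma>"] by auto
      have h_level: "h + \<gamma>' \<in> level i" unfolding level_def using h d by auto
      then have "h + \<gamma>' \<in> filled n" using level_subset_filled \<open>i < n\<close> by auto
      then have "\<eta> (k + (h + \<gamma>')) = alpha r (Suc i)" using k eta_level[OF h_level] by simp
      moreover have "k + (h + \<gamma>') = d" using d unfolding \<gamma>_def by (simp add: add.assoc)
      moreover have "\<eta> d = alpha r (Suc (Suc i))"
        using eta_level[OF J_subset_level[OF J_Suc_if_J[OF h \<gamma>_i \<gamma>_Suc d]]] .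
      ultimately show False using alpha_Suc_neq[OF r_gt_1, of "Suc i"] by simp
    qed
    then show ?case unfolding \<gamma>_def by simp
  qed
  then show ?thesis by simp
qed

lemma mem_Gamma_if_preserves_eta_on_D:
  assumes k: "\<forall>x\<in>D n - J \<Gamma> D n. k + x \<in> filled n \<and> \<eta> (k + x) = \<eta> x"
  shows "k \<in> \<Gamma> n"
proof (rule mem_Gamma_if_preserves_eta, intro ballI)
  fix x' assume x': "x' \<in> filled n"
  obtain x \<gamma> where x: "x \<in> D n" "\<gamma> \<in> \<Gamma> n" "x = x' + \<gamma>"
    using transversal_rep by blast
  then have "x \<in> filled n" using filled_add_right x' by simp
  then have kx: "k + x \<in> filled n" "\<eta> (k + x) = \<eta> x" using k x J_not_filled by auto
  have x'_eq: "k + x' = (k + x) + - \<gamma>" using x by (simp add: add.assoc)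
  show "k + x' \<in> filled n \<and> \<eta> (k + x') = \<eta> x'"
    unfolding x'_eq using filled_add_right[OF kx(1)] eta_filled_add_right[OF kx(1)]
      eta_filled_add_right[OF x' x(2)] kx x by auto
qed

text \<open>Left translation by \<open>k\<close> permutes the \<open>\<Gamma>\<^sub>n\<close>-cosets; if it maps the cosets of
  \<open>J(n)\<close> into holes, it permutes them, so it maps all other cosets to filled ones.\<close>

lemma translate_filled_if_translate_holes:
  assumes k: "\<forall>h\<in>J \<Gamma> D n. k + h \<in> holes n" and x: "x \<in> D n" "x \<notin> J \<Gamma> D n"
  shows "k + x \<in> filled n"
proof (rule ccontr)
  assume "k + x \<notin> filled n"
  define f where "f z = (SOME d. d \<in> D n \<and> (\<exists>\<gamma>\<in>\<Gamma> n. d = k + z + \<gamma>))" for z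
  have f: "f z \<in> D n \<and> (\<exists>\<gamma>\<in>\<Gamma> n. f z = k + z + \<gamma>)" for z
    unfolding f_def by (rule someI_ex) (use transversal_rep[of n "k + z"] in blast)
  have f_J: "f z \<in> J \<Gamma> D n" if "k + z \<in> holes n" for z
  proof -
    obtain \<gamma> where "\<gamma> \<in> \<Gamma> n" "f z = k + z + \<gamma>" using f by blast
    then have "f z \<in> holes n" using holes_add_right[OF that] by simp
    then show ?thesis using D_holes_iff_J f by blast
  qed
  have "inj_on f (D n)"
  proof (rule inj_onI)
    fix z z' assume z: "z \<in> D n" "z' \<in> D n" "f z = f z'"
    obtain \<gamma> \<gamma>' where \<gamma>: "\<gamma> \<in> \<Gamma> n" "\<gamma>' \<in> \<Gamma> n" "f z = k + z + \<gamma>" "f z' = k + z' + \<gamma>'"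
      using f[of z] f[of z'] by blast
    then have "z + \<gamma> = z' + \<gamma>'" using z by (simp add: add.assoc)
    then have "- z' + (z + \<gamma>) + - \<gamma> = - z' + (z' + \<gamma>') + - \<gamma>" by simp
    then have "- z' + z = \<gamma>' + - \<gamma>" by (simp add: add.assoc)
    then show "z = z'" using transversal_unique[of z' n z] z \<gamma> by (simp add: Gamma_add)
  qed
  then have inj_J: "inj_on f (J \<Gamma> D n)" using J_subset_D inj_on_subset by blast
  have "f ` J \<Gamma> D n = J \<Gamma> D n"
    using k f_J by (intro endo_inj_surj[OF finite_J _ inj_J]) auto
  moreover have "f x \<in> J \<Gamma> D n" using f_J \<open>k + x \<notin> filled n\<close> not_filled_iff_holes by blast
  ultimately obtain h where h: "h \<in> J \<Gamma> D n" "f x = f h" by (metis imageE)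
  then have "x = h" using inj_onD[OF \<open>inj_on f (D n)\<close>] x(1) J_subset_D by blast
  then show False using h x by simp
qed

abbreviation X :: "('g \<Rightarrow> nat) set" where "X \<equiv> Xsp r \<Gamma> D"

abbreviation C :: "nat \<Rightarrow> ('g \<Rightarrow> nat) set" where "C n \<equiv> Cn r \<Gamma> D n"

lemma X_locally_shift_eta: "y \<in> X \<Longrightarrow> finite F \<Longrightarrow> \<exists>t. \<forall>f\<in>F. y f = \<eta> (- t + f)"
  unfolding Xsp_def by (rule orbit_closure_locally_shift)

lemma shift_X: "y \<in> X \<Longrightarrow> shift g y \<in> X"
  unfolding Xsp_def by (rule shift_orbit_closure)

lemma X_in_range: "y \<in> X \<Longrightarrow> y z \<in> {1..r}"
  using X_locally_shift_eta[of y "{z}"] eta_in_range by auto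

lemma C_subset_X: "y \<in> C n \<Longrightarrow> y \<in> X"
  unfolding Cn_def by simp

lemma Per_C: "y \<in> C n \<Longrightarrow> a \<in> {1..r} \<Longrightarrow> x \<in> Per y (\<Gamma> n) a \<longleftrightarrow> x \<in> filled n \<and> \<eta> x = a"
  unfolding Cn_def using Per_eta by auto

lemma C_eq_eta_on_filled:
  assumes "y \<in> C n" "x \<in> filled n"
  shows "y x = \<eta> x"
proof -
  have "x \<in> Per y (\<Gamma> n) (\<eta> x)" using Per_C[OF assms(1) eta_in_range] assms(2) by simp
  then have "y (0 + x) = \<eta> x" using Gamma_zero[of n] unfolding Per_def by blast
  then show ?thesis by simp
qed

lemma C_nonconst_on_holes:
  assumes y: "y \<in> C n" and x: "x \<in> holes n"
  shows "\<exists>\<gamma>\<in>\<Gamma> n. y (\<gamma> + x) \<noteq> y x"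
proof (rule ccontr)
  assume "\<not> ?thesis"
  then have "x \<in> Per y (\<Gamma> n) (y x)" unfolding Per_def by auto
  then have "x \<in> filled n" using Per_C[OF y X_in_range[OF C_subset_X[OF y]]] by simp
  then show False using x holes_filled_disjoint by blast
qed

text \<open>A point of \<open>C\<^sub>n\<close> coincides on a finite window with a translate \<open>\<eta>(k + \<cdot>)\<close>; the
  window is chosen so large that \<open>k\<close> is forced into \<open>\<Gamma>\<^sub>n\<close>, and on \<open>J(n)\<close> the translate
  \<open>\<eta>(k + \<cdot>)\<close> is constant for \<open>k \<in> \<Gamma>\<^sub>n\<close>.\<close>

lemma C_const_on_J:
  assumes n: "1 \<le> n" and y: "y \<in> C n" and h: "h \<in> J \<Gamma> D n" and h': "h' \<in> J \<Gamma> D n"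
  shows "y h = y h'"
proof -
  have "\<forall>h\<in>J \<Gamma> D n. \<exists>\<gamma>. \<gamma> \<in> \<Gamma> n \<and> y (\<gamma> + h) \<noteq> y h"
    using C_nonconst_on_holes[OF y] J_subset_holes by blast
  from bchoice[OF this] obtain wit where wit: "\<forall>h\<in>J \<Gamma> D n. wit h \<in> \<Gamma> n \<and> y (wit h + h) \<noteq> y h"
    by blast
  have "finite (D n \<union> (\<lambda>h. wit h + h) ` J \<Gamma> D n)" using D_finite finite_J by simp
  then obtain t where t: "\<forall>f\<in>D n \<union> (\<lambda>h. wit h + h) ` J \<Gamma> D n. y f = \<eta> (- t + f)"
    using X_locally_shift_eta[OF C_subset_X[OF y]] by blast
  have J_holes: "- t + x \<in> holes n" if x: "x \<in> J \<Gamma> D n" for x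
  proof (rule ccontr)
    assume "- t + x \<notin> holes n"
    then have "- t + x \<in> filled n" using not_filled_iff_holes by blast
    then have "\<eta> ((- t + wit x + - (- t)) + (- t + x)) = \<eta> (- t + x)"
      using wit x by (intro eta_filled_add_left) auto
    then have "\<eta> (- t + (wit x + x)) = \<eta> (- t + x)" by (simp add: add.assoc)
    then show False using t wit x J_subset_D by auto
  qed
  have "\<forall>x\<in>D n - J \<Gamma> D n. - t + x \<in> filled n \<and> \<eta> (- t + x) = \<eta> x"
  proof
    fix x assume x: "x \<in> D n - J \<Gamma> D n"
    then have "x \<in> filled n" using J_eq_D_diff_filled by simp
    then have "y x = \<eta> x" by (rule C_eq_eta_on_filled[OF y])
    moreover have "y x = \<eta> (- t + x)" using t x by blast
    moreover have "- t + x \<in> filled n"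
      using translate_filled_if_translate_holes[where k="- t"] J_holes x by blast
    ultimately show "- t + x \<in> filled n \<and> \<eta> (- t + x) = \<eta> x" by simp
  qed
  then have "- t \<in> \<Gamma> n" by (rule mem_Gamma_if_preserves_eta_on_D)
  then show ?thesis using t h h' J_subset_D eta_add_J_eq[OF n h h'] by auto
qed

text \<open>A finite window can detect a hole only through finitely many translates; these suffice.\<close>

definition probes :: "nat \<Rightarrow> 'g set" where
  "probes n = {- d + d' | d d'. d \<in> D (Suc (Suc n)) \<and> d' \<in> D (Suc (Suc n))} \<inter> \<Gamma> n"

lemma finite_probes: "finite (probes n)"
proof -
  have "{- d + d' | d d'. d \<in> D (Suc (Suc n)) \<and> d' \<in> D (Suc (Suc n))}
      = (\<lambda>(d, d'). - d + d') ` (D (Suc (Suc n)) \<times> D (Suc (Suc n)))" by auto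
  then show ?thesis unfolding probes_def using D_finite by auto
qed

lemma probes_hit_level:
  assumes w: "- w + q \<in> \<Gamma> n" and q: "\<forall>\<delta>\<in>\<Gamma> (Suc (Suc n)). q + \<delta> \<in> level m"
  shows "\<exists>\<sigma>\<in>probes n. w + \<sigma> \<in> level m"
proof -
  obtain dw gw where dw: "dw \<in> D (Suc (Suc n))" "gw \<in> \<Gamma> (Suc (Suc n))" "dw = w + gw"
    using transversal_rep by blast
  obtain dq gq where dq: "dq \<in> D (Suc (Suc n))" "gq \<in> \<Gamma> (Suc (Suc n))" "dq = q + gq"
    using transversal_rep by blast
  have "gw \<in> \<Gamma> n" "gq \<in> \<Gamma> n" using dw dq Gamma_antimono[of n "Suc (Suc n)"] by auto
  moreover have dwq: "- dw + dq = - gw + (- w + q) + gq" using dw dq by (simp add: minus_add add.assoc)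
  ultimately have "- dw + dq \<in> \<Gamma> n" using w by (simp add: Gamma_add)
  then have probe: "- dw + dq \<in> probes n" unfolding probes_def using dw dq by blast
  define \<delta> where "\<delta> = (- q + (w + - gw + - w) + q) + gq"
  have "\<delta> \<in> \<Gamma> (Suc (Suc n))" unfolding \<delta>_def using dw dq by (simp add: Gamma_add)
  moreover have "w + (- dw + dq) = q + \<delta>" unfolding \<delta>_def dwq by (simp add: add.assoc)
  ultimately have "w + (- dw + dq) \<in> level m" using q by simp
  then show ?thesis using probe by blast
qed

lemma eta_nonconst_on_probes:
  assumes w: "w \<in> holes n"
  shows "\<exists>\<sigma>\<in>probes n. \<exists>\<sigma>'\<in>probes n. \<eta> (w + \<sigma>) \<noteq> \<eta> (w + \<sigma>')"
proof -
  obtain h g where hg: "h \<in> J \<Gamma> D n" "g \<in> \<Gamma> n" "w = h + g"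
    using w unfolding holes_def by auto
  obtain e where e: "e \<in> J \<Gamma> D (Suc n)" "- h + e \<in> \<Gamma> n"
    using J_Suc_near_J hg by auto
  have w_h: "- w + h \<in> \<Gamma> n" using hg by (simp add: minus_add add.assoc)
  have "- w + e = - g + (- h + e)" using hg by (simp add: minus_add add.assoc)
  then have w_e: "- w + e \<in> \<Gamma> n" using hg e by (simp add: Gamma_add)
  have "\<forall>\<delta>\<in>\<Gamma> (Suc (Suc n)). h + \<delta> \<in> level n"
    unfolding level_def using hg Gamma_Suc_subset by blast
  then obtain \<sigma> where \<sigma>: "\<sigma> \<in> probes n" "w + \<sigma> \<in> level n"
    using probes_hit_level[OF w_h] by blast
  have "\<forall>\<delta>\<in>\<Gamma> (Suc (Suc n)). e + \<delta> \<in> level (Suc n)"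
    unfolding level_def using e by blast
  then obtain \<sigma>' where \<sigma>': "\<sigma>' \<in> probes n" "w + \<sigma>' \<in> level (Suc n)"
    using probes_hit_level[OF w_e] by blast
  have "\<eta> (w + \<sigma>) \<noteq> \<eta> (w + \<sigma>')"
    using eta_level[OF \<sigma>(2)] eta_level[OF \<sigma>'(2)] alpha_Suc_neq[OF r_gt_1, of "Suc n"] by simp
  then show ?thesis using \<sigma> \<sigma>' by blast
qed

definition aligned :: "('g \<Rightarrow> nat) \<Rightarrow> nat \<Rightarrow> 'g \<Rightarrow> bool" where
  "aligned x n c \<longleftrightarrow> (\<forall>F. finite F \<longrightarrow> (\<exists>\<gamma>\<in>\<Gamma> n. \<forall>f\<in>F. x f = \<eta> (- (c + \<gamma>) + f)))"

lemma alignedD: "aligned x n c \<Longrightarrow> finite F \<Longrightarrow> \<exists>\<gamma>\<in>\<Gamma> n. \<forall>f\<in>F. x f = \<eta> (- (c + \<gamma>) + f)"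
  unfolding aligned_def by blast

lemma X_aligned:
  assumes x: "x \<in> X"
  shows "\<exists>c. aligned x n c"
proof (rule ccontr)
  assume "\<not> ?thesis"
  then obtain Ff where Ff: "\<And>c. finite (Ff c) \<and> (\<forall>\<gamma>\<in>\<Gamma> n. \<exists>f\<in>Ff c. x f \<noteq> \<eta> (- (c + \<gamma>) + f))"
    unfolding aligned_def by metis
  have "finite (\<Union>c\<in>D n. Ff c)" using D_finite Ff by blast
  then obtain t where t: "\<forall>f\<in>(\<Union>c\<in>D n. Ff c). x f = \<eta> (- t + f)"
    using X_locally_shift_eta[OF x] by blast
  obtain c \<gamma> where c: "c \<in> D n" "\<gamma> \<in> \<Gamma> n" "c = t + \<gamma>" using transversal_rep by blast
  then have "t = c + - \<gamma>" by (simp add: add.assoc)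
  moreover have "- \<gamma> \<in> \<Gamma> n" using c by simp
  then obtain f where "f \<in> Ff c" "x f \<noteq> \<eta> (- (c + - \<gamma>) + f)" using Ff[of c] by blast
  ultimately show False using t c(1) by auto
qed

lemma aligned_not_Per_at_holes:
  assumes c: "aligned x n c" and holes: "- c + z \<in> holes n"
  shows "z \<notin> Per x (\<Gamma> n) a"
proof
  assume z: "z \<in> Per x (\<Gamma> n) a"
  obtain \<gamma> where \<gamma>: "\<gamma> \<in> \<Gamma> n" "\<forall>\<sigma>\<in>probes n. x (z + \<sigma>) = \<eta> (- (c + \<gamma>) + (z + \<sigma>))"
    using alignedD[OF c, of "(\<lambda>\<sigma>. z + \<sigma>) ` probes n"] finite_probes by auto
  define w where "w = - \<gamma> + (- c + z)"
  have w: "w \<in> holes n" unfolding w_def using holes_add_left[OF holes] \<gamma> by simp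
  have "\<eta> (w + \<sigma>) = a" if \<sigma>: "\<sigma> \<in> probes n" for \<sigma>
  proof -
    have "z + \<sigma> + - z \<in> \<Gamma> n" using \<sigma> unfolding probes_def by simp
    then have "x ((z + \<sigma> + - z) + z) = a" using z unfolding Per_def by blast
    moreover have "x (z + \<sigma>) = \<eta> (w + \<sigma>)" using \<gamma> \<sigma> unfolding w_def
      by (simp add: minus_add add.assoc)
    ultimately show ?thesis by (simp add: add.assoc)
  qed
  then show False using eta_nonconst_on_probes[OF w] by auto
qed

lemma Per_if_aligned:
  assumes c: "aligned x n c"
  shows "z \<in> Per x (\<Gamma> n) a \<longleftrightarrow> - c + z \<in> filled n \<and> \<eta> (- c + z) = a"
proof
  assume cz: "- c + z \<in> filled n \<and> \<eta> (- c + z) = a"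
  show "z \<in> Per x (\<Gamma> n) a" unfolding Per_def
  proof (intro CollectI ballI)
    fix \<gamma>\<^sub>0 assume \<gamma>\<^sub>0: "\<gamma>\<^sub>0 \<in> \<Gamma> n"
    obtain \<gamma> where \<gamma>: "\<gamma> \<in> \<Gamma> n" "x (\<gamma>\<^sub>0 + z) = \<eta> (- (c + \<gamma>) + (\<gamma>\<^sub>0 + z))"
      using alignedD[OF c, of "{\<gamma>\<^sub>0 + z}"] by auto
    have "- (c + \<gamma>) + (\<gamma>\<^sub>0 + z) = (- \<gamma> + (- c + \<gamma>\<^sub>0 + c)) + (- c + z)"
      by (simp add: minus_add add.assoc)
    moreover have "- \<gamma> + (- c + \<gamma>\<^sub>0 + c) \<in> \<Gamma> n" using \<gamma> \<gamma>\<^sub>0 by (simp add: Gamma_add)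
    ultimately show "x (\<gamma>\<^sub>0 + z) = a" using \<gamma>(2) eta_filled_add_left cz by auto
  qed
next
  assume z: "z \<in> Per x (\<Gamma> n) a"
  then have "- c + z \<in> filled n"
    using aligned_not_Per_at_holes[OF c] not_filled_iff_holes by blast
  moreover obtain \<gamma> where "\<gamma> \<in> \<Gamma> n" "x z = \<eta> (- (c + \<gamma>) + z)"
    using alignedD[OF c, of "{z}"] by auto
  moreover have "- (c + \<gamma>) + z = - \<gamma> + (- c + z)" by (simp add: minus_add add.assoc)
  moreover have "x (0 + z) = a" using z Gamma_zero[of n] unfolding Per_def by blast
  ultimately show "- c + z \<in> filled n \<and> \<eta> (- c + z) = a" using eta_filled_add_left by auto
qed

lemma shift_into_C:
  assumes x: "x \<in> X"
  shows "\<exists>v\<in>D n. shift v x \<in> C n"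
proof -
  obtain c where c: "aligned x n c" using X_aligned[OF x] by blast
  obtain v \<gamma> where v: "v \<in> D n" "\<gamma> \<in> \<Gamma> n" "v = - c + \<gamma>" using transversal_rep by blast
  define \<delta> where "\<delta> = - c + - \<gamma> + c"
  have \<delta>: "\<delta> \<in> \<Gamma> n" unfolding \<delta>_def using v by simp
  have c_v: "- c + (- v + z) = \<delta> + z" for z unfolding \<delta>_def v by (simp add: minus_add add.assoc)
  have "Per (shift v x) (\<Gamma> n) a = Per \<eta> (\<Gamma> n) a" for a
  proof (rule set_eqI)
    fix z
    have "z \<in> Per (shift v x) (\<Gamma> n) a \<longleftrightarrow> - v + z \<in> Per x (\<Gamma> n) a"
      by (rule Per_shift[OF normal_Gamma])
    also have "\<dots> \<longleftrightarrow> - c + (- v + z) \<in> filled n \<and> \<eta> (- c + (- v + z)) = a"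
      by (rule Per_if_aligned[OF c])
    also have "\<dots> \<longleftrightarrow> \<delta> + z \<in> filled n \<and> \<eta> (\<delta> + z) = a"
      by (simp only: c_v)
    also have "\<dots> \<longleftrightarrow> z \<in> filled n \<and> \<eta> z = a"
      using filled_add_left_iff[OF \<delta>] eta_filled_add_left[OF _ \<delta>] by auto
    also have "\<dots> \<longleftrightarrow> z \<in> Per \<eta> (\<Gamma> n) a" using Per_eta by simp
    finally show "z \<in> Per (shift v x) (\<Gamma> n) a \<longleftrightarrow> z \<in> Per \<eta> (\<Gamma> n) a" .
  qed
  then show ?thesis using v shift_X[OF x] unfolding Cn_def by auto
qed

lemma shift_into_C_unique:
  assumes v: "v \<in> D n" "v' \<in> D n" and C: "shift v x \<in> C n" "shift v' x \<in> C n"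
  shows "v = v'"
proof -
  define g where "g = v' + - v"
  have shift_g: "shift g (shift v x) = shift v' x" unfolding g_def shift_shift by (simp add: add.assoc)
  have "\<forall>z\<in>filled n. g + z \<in> filled n \<and> \<eta> (g + z) = \<eta> z"
  proof
    fix z assume z: "z \<in> filled n"
    have "z \<in> Per (shift v x) (\<Gamma> n) (\<eta> z)" using Per_C[OF C(1) eta_in_range] z by simp
    then have "g + z \<in> Per (shift v' x) (\<Gamma> n) (\<eta> z)"
      unfolding shift_g[symmetric] Per_shift[OF normal_Gamma] by (simp add: add.assoc)
    then show "g + z \<in> filled n \<and> \<eta> (g + z) = \<eta> z" using Per_C[OF C(2) eta_in_range] by simp
  qed
  then have "g \<in> \<Gamma> n" by (rule mem_Gamma_if_preserves_eta)
  then have "- v + g + v \<in> \<Gamma> n" by simp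
  then have "- v + v' \<in> \<Gamma> n" unfolding g_def by (simp add: add.assoc)
  then show ?thesis using transversal_unique v by blast
qed

lemma X_coordinate_eq_UN_shift_C:
  "{x \<in> X. x 0 \<in> I} = (\<Union>w\<in>D n. shift (- w) ` {y \<in> C n. y w \<in> I})"
proof
  show "{x \<in> X. x 0 \<in> I} \<subseteq> (\<Union>w\<in>D n. shift (- w) ` {y \<in> C n. y w \<in> I})"
  proof
    fix x assume x: "x \<in> {x \<in> X. x 0 \<in> I}"
    then obtain w where w: "w \<in> D n" "shift w x \<in> C n" using shift_into_C by blast
    moreover have "shift w x w \<in> I" using x unfolding shift_def by simp
    moreover have "x = shift (- w) (shift w x)" by simp
    ultimately show "x \<in> (\<Union>w\<in>D n. shift (- w) ` {y \<in> C n. y w \<in> I})" by blast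
  qed
  show "(\<Union>w\<in>D n. shift (- w) ` {y \<in> C n. y w \<in> I}) \<subseteq> {x \<in> X. x 0 \<in> I}"
  proof
    fix x assume "x \<in> (\<Union>w\<in>D n. shift (- w) ` {y \<in> C n. y w \<in> I})"
    then obtain w y where y: "y \<in> C n" "y w \<in> I" "x = shift (- w) y" by blast
    then have "x \<in> X" using shift_X C_subset_X by blast
    moreover have "x 0 = y w" using y unfolding shift_def by simp
    ultimately show "x \<in> {x \<in> X. x 0 \<in> I}" using y by simp
  qed
qed

end

locale toeplitz_invariant_measure =
  toeplitz \<Gamma> D r + prob_space M
  for \<Gamma> D :: "nat \<Rightarrow> 'g::{group_add, countable} set" and r :: nat and M :: "('g \<Rightarrow> nat) measure" +
  assumes sets_M: "sets M = sets (restrict_space borel (Xsp r \<Gamma> D))"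
    and shift_measure_preserving: "\<And>g. shift g \<in> M \<rightarrow>\<^sub>M M \<and> distr M M (shift g) = M"
begin

lemma space_M: "space M = X"
  using sets_eq_imp_space_eq[OF sets_M] by (simp add: space_restrict_space)

lemma X_Int_borel_sets: "B \<in> sets borel \<Longrightarrow> X \<inter> B \<in> sets M"
  unfolding sets_M sets_restrict_space by auto

lemma C_sets: "C n \<in> sets M"
proof -
  have "C n = X \<inter> {x. \<forall>a\<in>{1..r}. \<forall>z. z \<in> Per x (\<Gamma> n) a \<longleftrightarrow> z \<in> Per \<eta> (\<Gamma> n) a}"
    unfolding Cn_def set_eq_iff by blast
  also have "\<dots> \<in> sets M"
    by (intro X_Int_borel_sets) (unfold Per_def, measurable)
  finally show ?thesis .
qed

lemma C_coordinate_sets: "{y \<in> C n. y w = i} \<in> sets M"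
proof -
  have "{y \<in> C n. y w = i} = C n \<inter> (X \<inter> {x. x w = i})" using C_subset_X by blast
  then show ?thesis using C_sets X_Int_borel_sets[of "{x. x w = i}"] by simp
qed

lemma Cni_sets: "Cni r \<Gamma> D n i \<in> sets M"
proof -
  have "Cni r \<Gamma> D n i = C n \<inter> (X \<inter> {x. \<forall>g\<in>J \<Gamma> D n. x g = i})"
    unfolding Cni_def using C_subset_X by blast
  then show ?thesis using C_sets X_Int_borel_sets[of "{x. \<forall>g\<in>J \<Gamma> D n. x g = i}"] by simp
qed

lemma shift_image_eq_vimage: "A \<in> sets M \<Longrightarrow> shift (- w) ` A = shift w -` A \<inter> space M"
  using sets.sets_into_space[of A M] shift_X by (auto simp: space_M intro!: image_eqI[of _ _ "shift w _"])

lemma shift_image_sets: "A \<in> sets M \<Longrightarrow> shift (- w) ` A \<in> sets M"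
  unfolding shift_image_eq_vimage using shift_measure_preserving[of w] by (blast intro: measurable_sets)

lemma measure_shift_image: "A \<in> sets M \<Longrightarrow> measure M (shift (- w) ` A) = measure M A"
  unfolding shift_image_eq_vimage
  using measure_distr[of "shift w" M M A] shift_measure_preserving by simp

lemma measure_UN_shift_C:
  assumes "\<And>w. A w \<subseteq> C n" "\<And>w. A w \<in> sets M"
  shows "measure M (\<Union>w\<in>D n. shift (- w) ` A w) = (\<Sum>w\<in>D n. measure M (A w))"
proof -
  have "disjoint_family_on (\<lambda>w. shift (- w) ` A w) (D n)"
    unfolding disjoint_family_on_def
  proof (intro ballI impI)
    fix w w' assume w: "w \<in> D n" "w' \<in> D n" "w \<noteq> w'"
    show "shift (- w) ` A w \<inter> shift (- w') ` A w' = {}"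
    proof (rule ccontr)
      assume "shift (- w) ` A w \<inter> shift (- w') ` A w' \<noteq> {}"
      then obtain y y' where y: "y \<in> A w" "y' \<in> A w'" "shift (- w) y = shift (- w') y'" by auto
      have "shift w (shift (- w) y) \<in> C n" using y(1) assms(1) by auto
      moreover have "shift w' (shift (- w) y) \<in> C n" using y(2,3) assms(1) by auto
      ultimately show False using shift_into_C_unique w by blast
    qed
  qed
  then have "measure M (\<Union>w\<in>D n. shift (- w) ` A w) = (\<Sum>w\<in>D n. measure M (shift (- w) ` A w))"
    using D_finite shift_image_sets assms(2) by (intro measure_finite_Union) auto
  also have "\<dots> = (\<Sum>w\<in>D n. measure M (A w))"
    using measure_shift_image assms(2) by simp
  finally show ?thesis .
qed

lemma measure_C: "measure M (C n) = 1 / card (D n)"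
proof -
  have "1 = measure M X" using prob_space space_M by simp
  also have "\<dots> = (\<Sum>w\<in>D n. measure M (C n))"
    using X_coordinate_eq_UN_shift_C[of UNIV n] measure_UN_shift_C[of "\<lambda>_. C n"] C_sets by simp
  finally have "1 = card (D n) * measure M (C n)" by simp
  moreover have "card (D n) > 0" using D_finite D_zero card_gt_0_iff by blast
  ultimately show ?thesis by (simp add: field_simps)
qed

lemma measure_Cni:
  assumes n: "1 \<le> n"
  shows "measure M (Cni r \<Gamma> D n i) =
    (measure M {x \<in> X. x 0 = i} - card {w \<in> D n - J \<Gamma> D n. \<eta> w = i} / card (D n))
      / card (J \<Gamma> D n)"
proof -
  let ?c = "measure M (C n)" and ?q = "measure M (Cni r \<Gamma> D n i)"
  have piece: "measure M {y \<in> C n. y w = i} = (if w \<in> J \<Gamma> D n then ?q else if \<eta> w = i then ?c else 0)"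
    if w: "w \<in> D n" for w
  proof (cases "w \<in> J \<Gamma> D n")
    case True
    then have "{y \<in> C n. y w = i} = Cni r \<Gamma> D n i"
      unfolding Cni_def using C_const_on_J[OF n] by blast
    then show ?thesis using True by simp
  next
    case False
    then have "w \<in> filled n" using J_eq_D_diff_filled w by simp
    then have "{y \<in> C n. y w = i} = (if \<eta> w = i then C n else {})"
      using C_eq_eta_on_filled by auto
    then show ?thesis using False by simp
  qed
  have "measure M {x \<in> X. x 0 = i} = (\<Sum>w\<in>D n. measure M {y \<in> C n. y w = i})"
    using X_coordinate_eq_UN_shift_C[of "{i}" n] measure_UN_shift_C C_coordinate_sets by simp
  also have "\<dots> = (\<Sum>w\<in>D n - J \<Gamma> D n. measure M {y \<in> C n. y w = i})
      + (\<Sum>w\<in>J \<Gamma> D n. measure M {y \<in> C n. y w = i})"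
    using J_subset_D by (intro sum.subset_diff D_finite) blast
  also have "\<dots> = (\<Sum>w\<in>D n - J \<Gamma> D n. if \<eta> w = i then ?c else 0) + (\<Sum>w\<in>J \<Gamma> D n. ?q)"
    using piece J_subset_D by (intro arg_cong2[where f = "(+)"] sum.cong) auto
  also have "\<dots> = card {w \<in> D n - J \<Gamma> D n. \<eta> w = i} / card (D n) + card (J \<Gamma> D n) * ?q"
    using D_finite by (simp add: sum.inter_filter[symmetric] measure_C)
  finally show ?thesis using card_J_pos by (simp add: field_simps)
qed

end

theorem lemma4p13:
  fixes r :: nat
    and \<Gamma> D :: "nat \<Rightarrow> 'g::{group_add, countable} set"
    and \<mu> \<nu> :: "('g \<Rightarrow> nat) measure"
  assumes r: "r > 1"
    and Gamma0: "\<Gamma> 0 = UNIV"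
    and Gamma_normal: "\<And>i. i \<ge> 1 \<Longrightarrow> normal_subgroup_add (\<Gamma> i)"
    and Gamma_fin_index: "\<And>i. i \<ge> 1 \<Longrightarrow> finite {lcoset g (\<Gamma> i) | g. True}"
    and Gamma_strict: "\<And>i. i \<ge> 1 \<Longrightarrow> \<Gamma> (Suc i) \<subset> \<Gamma> i"
    and Gamma_inter: "(\<Inter>i\<in>{1..}. \<Gamma> i) = {0}"
    and index_G: "\<And>i. i \<ge> 1 \<Longrightarrow> sub_index UNIV (\<Gamma> i) \<ge> 3"
    and index_step: "\<And>i. i \<ge> 1 \<Longrightarrow> sub_index (\<Gamma> i) (\<Gamma> (Suc i)) \<ge> 3"
    and D0: "D 0 = {0}"
    and D_fin: "\<And>i. finite (D i)"
    and D_transversal: "\<And>i g. \<exists>!d. d \<in> D i \<and> d \<in> lcoset g (\<Gamma> i)"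
    and D_one: "\<And>i. 0 \<in> D i"
    and D_mono: "\<And>i. D i \<subseteq> D (Suc i)"
    and D_cover: "(\<Union>i. D i) = UNIV"
    and D_nested: "\<And>i j. 1 \<le> i \<Longrightarrow> i < j \<Longrightarrow>
                      D j = (\<Union>v\<in>D j \<inter> \<Gamma> i. (\<lambda>d. v + d) ` D i)"
    and mu_prob: "prob_space \<mu>"
    and mu_sets: "sets \<mu> = sets (restrict_space borel (Xsp r \<Gamma> D))"
    and mu_inv: "\<And>g. shift g \<in> \<mu> \<rightarrow>\<^sub>M \<mu> \<and> distr \<mu> \<mu> (shift g) = \<mu>"
    and nu_prob: "prob_space \<nu>"
    and nu_sets: "sets \<nu> = sets (restrict_space borel (Xsp r \<Gamma> D))"
    and nu_inv: "\<And>g. shift g \<in> \<nu> \<rightarrow>\<^sub>M \<nu> \<and> distr \<nu> \<nu> (shift g) = \<nu>"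
    and p_eq: "\<And>i. i \<in> {1..r} \<Longrightarrow>
                 measure \<mu> {x \<in> Xsp r \<Gamma> D. x 0 = i} = measure \<nu> {x \<in> Xsp r \<Gamma> D. x 0 = i}"
  shows "\<forall>n\<ge>1. \<forall>A\<in>Pn r \<Gamma> D n. measure \<mu> A = measure \<nu> A"
proof -
  \<comment> \<open>The index bounds enter only through \<open>\<Gamma>\<^sub>1 \<noteq> G\<close>; finiteness of the indices,
    \<open>\<Inter>\<^sub>i \<Gamma>\<^sub>i = {1\<^sub>G}\<close>, \<open>D\<^sub>0 = {1\<^sub>G}\<close> and the monotonicity and covering of the \<open>D\<^sub>i\<close>
    are not needed.\<close>
  have "\<Gamma> 1 \<noteq> UNIV"
  proof
    assume "\<Gamma> 1 = UNIV"
    then have "sub_index UNIV (\<Gamma> 1) = 1" by (simp add: sub_index_UNIV_UNIV)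
    then show False using index_G[of 1] by simp
  qed
  then have T: "toeplitz \<Gamma> D r"
    by unfold_locales (use r Gamma0 Gamma_normal Gamma_strict D_fin D_transversal D_one D_nested in auto)
  interpret \<mu>: toeplitz_invariant_measure \<Gamma> D r \<mu>
    by (intro toeplitz_invariant_measure.intro toeplitz_invariant_measure_axioms.intro T mu_prob mu_sets mu_inv)
  interpret \<nu>: toeplitz_invariant_measure \<Gamma> D r \<nu>
    by (intro toeplitz_invariant_measure.intro toeplitz_invariant_measure_axioms.intro T nu_prob nu_sets nu_inv)
  show ?thesis
  proof (intro allI impI ballI)
    fix n A assume n: "1 \<le> n" and "A \<in> Pn r \<Gamma> D n"
    then obtain i v where i: "i \<in> {1..r}" and A: "A = shift (- v) ` Cni r \<Gamma> D n i"
      unfolding Pn_def by auto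
    show "measure \<mu> A = measure \<nu> A"
      unfolding A \<mu>.measure_shift_image[OF \<mu>.Cni_sets] \<nu>.measure_shift_image[OF \<nu>.Cni_sets]
        \<mu>.measure_Cni[OF n] \<nu>.measure_Cni[OF n] p_eq[OF i] ..
  qed
qed

end
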